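(* The unitality, associativity and symmetry isomorphisms of the cartesian product on $E\mathcal M\text{-}\mathbf{SSet}$ restrict to isomorphisms for the box product $\boxtimes$ on $E\mathcal M\text{-}\mathbf{SSet}^\mu$ (e.g.\ $(X\times Y)\times Z\cong X\times(Y\times Z)$ restricts to an isomorphism $(X\boxtimes Y)\boxtimes Z\cong X\boxtimes(Y\boxtimes Z)$). This makes $E\mathcal M\text{-}\mathbf{SSet}^\mu$ a simplicial symmetric monoidal category with tensor product $\boxtimes$ and unit the terminal $E\mathcal M$-simplicial set.
   Context: $\omega=\{1,2,\dots\}$, $\mathcal M$ the monoid of injections $\omega\to\omega$, $\mathcal M_A$ those fixing $A\subset\omega$ pointwise; $A$ co-infinite if $\omega\setminus A$ is infinite. $E\mathcal M$ is the simplicial monoid with $(E\mathcal M)_n=\mathcal M^{1+n}$, pointwise multiplication, structure maps by precomposition. $E\mathcal M\text{-}\mathbf{SSet}$ is the category of simplicial sets with left $E\mathcal M$-action. $x\in X_n$ is $k$-supported on $A$ if $i_k(u).x=x$ for all $u\in\mathcal M_A$ ($i_k$ inclusion of the $(1+k)$-th factor). $X$ is mild if every $x\in X_n$ is, for each $0\le k\le n$, $k$-supported on some co-infinite set; $E\mathcal M\text{-}\mathbf{SSet}^\mu$ is the full subcategory of mild objects. The box product $X\boxtimes Y\subset X\times Y$ of mild $X,Y$ consists in degree $n$ of all $(x,y)$ such that for every $k$ there are disjoint $A_k,B_k\subset\omega$ with $A_k\cup B_k$ co-infinite, $x$ $k$-supported on $A_k$, $y$ $k$-supported on $B_k$; it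 is a mild $E\mathcal M$-simplicial subset of $X\times Y$ and functorial in $X,Y$. *)

theory Defs
  imports Main
begin

text \<open>The set omega = {1,2,...} is modelled by the type nat (a relabelling n |-> n+1);
  the monoid M of injections omega -> omega is {u :: nat => nat. inj u}.
  A simplicial set with E M action is given by
   - a carrier X :: nat => 'a set (X n = set of n-simplices),
   - simplicial operators sm m n f : X n -> X m for monotone f : [m] -> [n],
   - the action act n u : X n -> X n for u = (u 0, ..., u n) in M^(1+n).\<close>

definition simp_op :: "nat \<Rightarrow> nat \<Rightarrow> (nat \<Rightarrow> nat) \<Rightarrow> bool" where
  "simp_op m n f \<longleftrightarrow> (\<forall>i\<le>m. f i \<le> n) \<and> (\<forall>i j. i \<le> j \<longrightarrow> j \<le> m \<longrightarrow> f i \<le> f j)"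

definition EMtuple :: "nat \<Rightarrow> (nat \<Rightarrow> nat \<Rightarrow> nat) \<Rightarrow> bool" where
  "EMtuple n u \<longleftrightarrow> (\<forall>k\<le>n. inj (u k))"

definition em_sset ::
  "(nat \<Rightarrow> 'a set) \<Rightarrow> (nat \<Rightarrow> nat \<Rightarrow> (nat \<Rightarrow> nat) \<Rightarrow> 'a \<Rightarrow> 'a)
     \<Rightarrow> (nat \<Rightarrow> (nat \<Rightarrow> nat \<Rightarrow> nat) \<Rightarrow> 'a \<Rightarrow> 'a) \<Rightarrow> bool" where
  "em_sset X sm act \<longleftrightarrow>
     \<comment> \<open>simplicial set\<close>
     (\<forall>m n f x. simp_op m n f \<longrightarrow> x \<in> X n \<longrightarrow> sm m n f x \<in> X m) \<and>
     (\<forall>m n f g x. simp_op m n f \<longrightarrow> (\<forall>i\<le>m. f i = g i) \<longrightarrow> x \<in> X n \<longrightarrow> sm m n f x = sm m n g x) \<and>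
     (\<forall>n x. x \<in> X n \<longrightarrow> sm n n id x = x) \<and>
     (\<forall>k m n f g x. simp_op m n f \<longrightarrow> simp_op k m g \<longrightarrow> x \<in> X n \<longrightarrow>
         sm k m g (sm m n f x) = sm k n (f \<circ> g) x) \<and>
     \<comment> \<open>levelwise monoid action of M^(1+n), pointwise multiplication\<close>
     (\<forall>n u x. EMtuple n u \<longrightarrow> x \<in> X n \<longrightarrow> act n u x \<in> X n) \<and>
     (\<forall>n u v x. EMtuple n u \<longrightarrow> (\<forall>k\<le>n. u k = v k) \<longrightarrow> x \<in> X n \<longrightarrow> act n u x = act n v x) \<and>
     (\<forall>n x. x \<in> X n \<longrightarrow> act n (\<lambda>k. id) x = x) \<and>
     (\<forall>n u v x. EMtuple n u \<longrightarrow> EMtuple n v \<longrightarrow> x \<in> X n \<longrightarrow>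
         act n (\<lambda>k. u k \<circ> v k) x = act n u (act n v x)) \<and>
     \<comment> \<open>compatibility: structure maps of E M are precomposition\<close>
     (\<forall>m n f u x. simp_op m n f \<longrightarrow> EMtuple n u \<longrightarrow> x \<in> X n \<longrightarrow>
         sm m n f (act n u x) = act m (\<lambda>j. u (f j)) (sm m n f x))"

definition incl_k :: "nat \<Rightarrow> (nat \<Rightarrow> nat) \<Rightarrow> nat \<Rightarrow> nat \<Rightarrow> nat" where
  "incl_k k u = (\<lambda>j. if j = k then u else id)"

definition supported ::
  "(nat \<Rightarrow> (nat \<Rightarrow> nat \<Rightarrow> nat) \<Rightarrow> 'a \<Rightarrow> 'a) \<Rightarrow> nat \<Rightarrow> 'a \<Rightarrow> nat \<Rightarrow> nat set \<Rightarrow> bool" where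
  "supported act n x k A \<longleftrightarrow>
     (\<forall>u. inj u \<longrightarrow> (\<forall>a\<in>A. u a = a) \<longrightarrow> act n (incl_k k u) x = x)"

definition coinfinite :: "nat set \<Rightarrow> bool" where
  "coinfinite A \<longleftrightarrow> infinite (UNIV - A)"

definition mild :: "(nat \<Rightarrow> 'a set) \<Rightarrow> (nat \<Rightarrow> (nat \<Rightarrow> nat \<Rightarrow> nat) \<Rightarrow> 'a \<Rightarrow> 'a) \<Rightarrow> bool" where
  "mild X act \<longleftrightarrow> (\<forall>n. \<forall>x\<in>X n. \<forall>k\<le>n. \<exists>A. coinfinite A \<and> supported act n x k A)"

definition prod_sm ::
  "(nat \<Rightarrow> nat \<Rightarrow> (nat \<Rightarrow> nat) \<Rightarrow> 'a \<Rightarrow> 'a) \<Rightarrow> (nat \<Rightarrow> nat \<Rightarrow> (nat \<Rightarrow> nat) \<Rightarrow> 'b \<Rightarrow> 'b)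
     \<Rightarrow> nat \<Rightarrow> nat \<Rightarrow> (nat \<Rightarrow> nat) \<Rightarrow> 'a \<times> 'b \<Rightarrow> 'a \<times> 'b" where
  "prod_sm smX smY m n f p = (smX m n f (fst p), smY m n f (snd p))"

definition prod_act ::
  "(nat \<Rightarrow> (nat \<Rightarrow> nat \<Rightarrow> nat) \<Rightarrow> 'a \<Rightarrow> 'a) \<Rightarrow> (nat \<Rightarrow> (nat \<Rightarrow> nat \<Rightarrow> nat) \<Rightarrow> 'b \<Rightarrow> 'b)
     \<Rightarrow> nat \<Rightarrow> (nat \<Rightarrow> nat \<Rightarrow> nat) \<Rightarrow> 'a \<times> 'b \<Rightarrow> 'a \<times> 'b" where
  "prod_act actX actY n u p = (actX n u (fst p), actY n u (snd p))"

text \<open>Box product (as carrier; structure maps are those of the cartesian product).\<close>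
definition box ::
  "(nat \<Rightarrow> 'a set) \<Rightarrow> (nat \<Rightarrow> (nat \<Rightarrow> nat \<Rightarrow> nat) \<Rightarrow> 'a \<Rightarrow> 'a)
     \<Rightarrow> (nat \<Rightarrow> 'b set) \<Rightarrow> (nat \<Rightarrow> (nat \<Rightarrow> nat \<Rightarrow> nat) \<Rightarrow> 'b \<Rightarrow> 'b) \<Rightarrow> nat \<Rightarrow> ('a \<times> 'b) set" where
  "box X actX Y actY n = {(x, y). x \<in> X n \<and> y \<in> Y n \<and>
     (\<forall>k\<le>n. \<exists>A B. A \<inter> B = {} \<and> coinfinite (A \<union> B) \<and>
        supported actX n x k A \<and> supported actY n y k B)}"

definition term_X :: "nat \<Rightarrow> unit set" where "term_X n = {()}"
definition term_sm :: "nat \<Rightarrow> nat \<Rightarrow> (nat \<Rightarrow> nat) \<Rightarrow> unit \<Rightarrow> unit" where "term_sm m n f x = ()"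
definition term_act :: "nat \<Rightarrow> (nat \<Rightarrow> nat \<Rightarrow> nat) \<Rightarrow> unit \<Rightarrow> unit" where "term_act n u x = ()"

end

theory Submission
  imports Defs "HOL-Library.Infinite_Set"
begin

text \<open>If a simplex \<open>x\<close> is \<open>k\<close>-supported on a coinfinite set \<open>A\<close>, the action of \<open>i\<^sub>k(g)\<close> on \<open>x\<close>
  depends only on the restriction of \<open>g\<close> to \<open>A\<close>: extend \<open>g|\<^sub>A\<close> to a bijection \<open>\<sigma>\<close>, then
  \<open>g = \<sigma> \<circ> (\<sigma>\<inverse> \<circ> g)\<close> and \<open>\<sigma>\<inverse> \<circ> g\<close> fixes \<open>A\<close>. Consequently coinfinite supports are closed under
  intersection and are transported along \<open>u\<^sub>k\<close> by the action of \<open>u\<close>. Simplicial operators only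
  yield invariance under diagonal tuples \<open>(w, \<dots>, w)\<close> on a block of positions, which is shown
  to imply support as well; so the box product is closed under the structure maps.
  Intersecting supports shows that both bracketings of a triple box product consist of the
  triples admitting pairwise disjoint supports with coinfinite union, hence the associator
  restricts; symmetry is evident, and the terminal object is supported on \<open>{}\<close>.\<close>

section \<open>Coinfinite sets of natural numbers\<close>

lemma coinfinite_iff_infinite_Compl: "coinfinite A \<longleftrightarrow> infinite (- A)"
  by (simp add: coinfinite_def Compl_eq_Diff_UNIV)

lemma coinfinite_empty [simp]: "coinfinite {}"
  by (simp add: coinfinite_def)

lemma coinfinite_subset: "coinfinite B \<Longrightarrow> A \<subseteq> B \<Longrightarrow> coinfinite A"
  unfolding coinfinite_iff_infinite_Compl by (meson compl_mono finite_subset)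

lemma coinfinite_image:
  fixes g :: "nat \<Rightarrow> nat"
  assumes "inj g" "coinfinite A"
  shows "coinfinite (g ` A)"
proof -
  have "g ` (- A) \<subseteq> - (g ` A)"
    using assms(1) by (auto simp: inj_eq)
  moreover have "infinite (g ` (- A))"
    using assms by (simp add: coinfinite_iff_infinite_Compl finite_image_iff inj_on_subset)
  ultimately show ?thesis
    unfolding coinfinite_iff_infinite_Compl by (meson finite_subset)
qed

lemma inj_piecewise_enumerate:
  fixes R :: "nat set"
  assumes "inj_on f A" "infinite R" "f ` A \<inter> R = {}"
  shows "inj (\<lambda>i. if i \<in> A then f i else enumerate R i)"
proof -
  have "enumerate R ` (- A) \<subseteq> R"
    using enumerate_in_set[OF assms(2)] by blast
  then have "inj_on (\<lambda>i. if i \<in> A then f i else enumerate R i) (A \<union> - A)"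
    using assms inj_enumerate[OF assms(2)]
    by (intro inj_on_disjoint_Un) (auto intro: inj_on_subset)
  then show ?thesis
    by simp
qed

lemma inj_extends_to_bij:
  fixes g :: "nat \<Rightarrow> nat"
  assumes "coinfinite A" "inj g"
  obtains \<sigma> where "bij \<sigma>" "\<And>i. i \<in> A \<Longrightarrow> \<sigma> i = g i"
proof -
  have inf: "infinite (- A)" "infinite (- g ` A)"
    using assms coinfinite_image by (auto simp: coinfinite_iff_infinite_Compl)
  define t where "t = enumerate (- g ` A) \<circ> inv_into UNIV (enumerate (- A))"
  have "bij_betw t (- A) (- g ` A)"
    unfolding t_def
    using bij_betw_trans[OF bij_betw_inv_into[OF bij_enumerate[OF inf(1)]] bij_enumerate[OF inf(2)]] .
  moreover have "bij_betw g A (g ` A)"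
    using assms(2) by (simp add: bij_betw_imageI inj_on_subset)
  ultimately have "bij_betw (\<lambda>i. if i \<in> A then g i else t i) (A \<union> - A) (g ` A \<union> - g ` A)"
    by (intro bij_betw_disjoint_Un) auto
  then show ?thesis
    by (intro that[of "\<lambda>i. if i \<in> A then g i else t i"]) auto
qed

lemma inj_fixing_with_coinfinite_range:
  assumes "coinfinite A"
  obtains v :: "nat \<Rightarrow> nat" where "inj v" "\<And>i. i \<in> A \<Longrightarrow> v i = i" "coinfinite (range v)"
proof -
  obtain P Q where PQ: "P \<subseteq> - A" "Q \<subseteq> - A" "infinite P" "infinite Q" "P \<inter> Q = {}"
    using infinite_split assms unfolding coinfinite_iff_infinite_Compl by metis
  define v where "v = (\<lambda>i. if i \<in> A then id i else enumerate P i)"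
  have "inj v"
    unfolding v_def using PQ by (intro inj_piecewise_enumerate) auto
  moreover have "range v \<subseteq> A \<union> P"
    using enumerate_in_set[OF PQ(3)] by (auto simp: v_def)
  then have "Q \<subseteq> - range v"
    using PQ by blast
  then have "coinfinite (range v)"
    using PQ(4) unfolding coinfinite_iff_infinite_Compl by (rule infinite_super)
  ultimately show ?thesis
    using that by (simp add: v_def)
qed

lemma infinite_subset_coinfinite_Un:
  fixes W :: "nat set"
  assumes "infinite W" "coinfinite A"
  obtains Q where "Q \<subseteq> W" "infinite Q" "coinfinite (A \<union> Q)"
proof (cases "finite (W \<inter> A)")
  case True
  then have "infinite (W - A)"
    using assms(1) by (metis Int_Diff_Un finite_Un)
  then obtain P Q where PQ: "P \<subseteq> W - A" "Q \<subseteq> W - A" "infinite P" "infinite Q" "P \<inter> Q = {}"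
    by (rule infinite_split)
  then have "Q \<subseteq> - (A \<union> P)"
    by blast
  then have "coinfinite (A \<union> P)"
    using PQ(4) unfolding coinfinite_iff_infinite_Compl by (rule infinite_super)
  then show ?thesis
    using PQ that by blast
next
  case False
  then show ?thesis
    using assms(2) that[of "W \<inter> A"] by (simp add: Un_absorb2)
qed

lemma em_sset_act_closed: "em_sset X sm act \<Longrightarrow> EMtuple n u \<Longrightarrow> x \<in> X n \<Longrightarrow> act n u x \<in> X n"
  unfolding em_sset_def by blast

lemma em_sset_act_comp:
  "em_sset X sm act \<Longrightarrow> EMtuple n u \<Longrightarrow> EMtuple n v \<Longrightarrow> x \<in> X n \<Longrightarrow>
    act n (\<lambda>k. u k \<circ> v k) x = act n u (act n v x)"
  unfolding em_sset_def by blast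

lemma em_sset_sm_closed: "em_sset X sm act \<Longrightarrow> simp_op m n f \<Longrightarrow> x \<in> X n \<Longrightarrow> sm m n f x \<in> X m"
  unfolding em_sset_def by (elim conjE) blast

lemma em_sset_sm_act:
  "em_sset X sm act \<Longrightarrow> simp_op m n f \<Longrightarrow> EMtuple n u \<Longrightarrow> x \<in> X n \<Longrightarrow>
    sm m n f (act n u x) = act m (\<lambda>j. u (f j)) (sm m n f x)"
  unfolding em_sset_def by blast

lemma em_sset_prod_subset:
  assumes "em_sset X smX aX" "em_sset Y smY aY" "\<And>n. S n \<subseteq> X n \<times> Y n"
    and "\<And>m n f p. simp_op m n f \<Longrightarrow> p \<in> S n \<Longrightarrow> prod_sm smX smY m n f p \<in> S m"
    and "\<And>n u p. EMtuple n u \<Longrightarrow> p \<in> S n \<Longrightarrow> prod_act aX aY n u p \<in> S n"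
  shows "em_sset S (prod_sm smX smY) (prod_act aX aY)"
  using assms unfolding em_sset_def prod_sm_def prod_act_def
  by (simp add: subset_iff mem_Times_iff)

lemma EMtuple_incl_k: "inj u \<Longrightarrow> EMtuple n (incl_k k u)"
  by (simp add: EMtuple_def incl_k_def)

lemma act_incl_k_comp:
  assumes "em_sset X sm act" "x \<in> X n" "inj u" "inj v"
  shows "act n (incl_k k (u \<circ> v)) x = act n (incl_k k u) (act n (incl_k k v) x)"
proof -
  have "incl_k k (u \<circ> v) = (\<lambda>j. incl_k k u j \<circ> incl_k k v j)"
    by (auto simp: incl_k_def)
  then show ?thesis
    using em_sset_act_comp[OF assms(1) EMtuple_incl_k[OF assms(3)] EMtuple_incl_k[OF assms(4)] assms(2)]
    by simp
qed

section \<open>Supports\<close>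

lemma supported_mono: "supported act n x k A \<Longrightarrow> A \<subseteq> B \<Longrightarrow> supported act n x k B"
  unfolding supported_def by blast

lemma supported_prod_act_iff:
  "supported (prod_act aX aY) n p k A \<longleftrightarrow> supported aX n (fst p) k A \<and> supported aY n (snd p) k A"
  unfolding supported_def prod_act_def by (auto simp: prod_eq_iff)

lemma supported_term_act: "supported term_act n () k A"
  by (simp add: supported_def term_act_def)

lemma supported_act_incl_k_cong:
  assumes em: "em_sset X sm act" and x: "x \<in> X n"
    and supp: "supported act n x k A" and A: "coinfinite A"
    and g: "inj g" and h: "inj h" and gh: "\<And>i. i \<in> A \<Longrightarrow> g i = h i"
  shows "act n (incl_k k g) x = act n (incl_k k h) x"
proof -
  obtain \<sigma> where \<sigma>: "bij \<sigma>" "\<And>i. i \<in> A \<Longrightarrow> \<sigma> i = g i"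
    using inj_extends_to_bij[OF A g] by blast
  have "act n (incl_k k f) x = act n (incl_k k \<sigma>) x"
    if f: "inj f" "\<And>i. i \<in> A \<Longrightarrow> f i = \<sigma> i" for f
  proof -
    have inj_\<sigma>: "inj \<sigma>" and inj_inv_f: "inj (inv \<sigma> \<circ> f)"
      using \<sigma>(1) f(1) bij_is_inj bij_imp_bij_inv inj_compose by blast+
    have "f = \<sigma> \<circ> (inv \<sigma> \<circ> f)"
      using \<sigma>(1) by (simp add: fun_eq_iff bij_is_surj surj_f_inv_f)
    then have "act n (incl_k k f) x = act n (incl_k k \<sigma>) (act n (incl_k k (inv \<sigma> \<circ> f)) x)"
      using act_incl_k_comp[OF em x inj_\<sigma> inj_inv_f] by simp
    moreover have "act n (incl_k k (inv \<sigma> \<circ> f)) x = x"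
      using supp inj_inv_f f(2) inv_f_f[OF inj_\<sigma>] unfolding supported_def by simp
    ultimately show ?thesis
      by simp
  qed
  then show ?thesis
    using g h gh \<sigma>(2) by metis
qed

lemma supported_act:
  assumes em: "em_sset X sm act" and x: "x \<in> X n" and u: "EMtuple n u" and k: "k \<le> n"
    and supp: "supported act n x k A" and A: "coinfinite A"
  shows "supported act n (act n u x) k (u k ` A)"
  unfolding supported_def
proof (intro allI impI)
  fix v :: "nat \<Rightarrow> nat" assume v: "inj v" and v_fix: "\<forall>a\<in>u k ` A. v a = a"
  have uk: "inj (u k)"
    using u k by (simp add: EMtuple_def)
  define u' where "u' = (\<lambda>j. if j = k then id else u j)"
  have u': "EMtuple n u'"
    using u by (simp add: EMtuple_def u'_def)
  have vuk: "inj (v \<circ> u k)"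
    using v uk by (rule inj_compose)
  have "act n (incl_k k v) (act n u x) = act n (\<lambda>j. incl_k k v j \<circ> u j) x"
    using em_sset_act_comp[OF em EMtuple_incl_k[OF v] u x] by simp
  also have "(\<lambda>j. incl_k k v j \<circ> u j) = (\<lambda>j. u' j \<circ> incl_k k (v \<circ> u k) j)"
    by (auto simp: incl_k_def u'_def)
  also have "act n \<dots> x = act n u' (act n (incl_k k (v \<circ> u k)) x)"
    using em_sset_act_comp[OF em u' EMtuple_incl_k[OF vuk] x] .
  also have "act n (incl_k k (v \<circ> u k)) x = act n (incl_k k (u k)) x"
    using supported_act_incl_k_cong[OF em x supp A vuk uk] v_fix by simp
  also have "act n u' (act n (incl_k k (u k)) x) = act n (\<lambda>j. u' j \<circ> incl_k k (u k) j) x"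
    using em_sset_act_comp[OF em u' EMtuple_incl_k[OF uk] x] by simp
  also have "(\<lambda>j. u' j \<circ> incl_k k (u k) j) = u"
    by (auto simp: incl_k_def u'_def)
  finally show "act n (incl_k k v) (act n u x) = act n u x" .
qed

lemma supported_Int:
  assumes em: "em_sset X sm act" and x: "x \<in> X n"
    and supp_A: "supported act n x k A" and supp_D: "supported act n x k D"
    and A: "coinfinite A" and D: "coinfinite D"
  shows "supported act n x k (A \<inter> D)"
  unfolding supported_def
proof (intro allI impI)
  fix u :: "nat \<Rightarrow> nat" assume u: "inj u" and u_fix: "\<forall>a\<in>A \<inter> D. u a = a"
  \<comment> \<open>\<open>u \<sim>\<^sub>D u' \<sim>\<^sub>A t \<sim>\<^sub>D s\<close>, where \<open>\<sim>\<^sub>B\<close> means agreeing on \<open>B\<close> and \<open>s\<close> fixes \<open>A\<close>\<close>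
  have "infinite (- u ` D)"
    using coinfinite_image[OF u D] by (simp add: coinfinite_iff_infinite_Compl)
  then obtain Q where Q: "Q \<subseteq> - u ` D" "infinite Q" "coinfinite (A \<union> Q)"
    using A by (rule infinite_subset_coinfinite_Un)
  define u' where "u' = (\<lambda>i. if i \<in> D then u i else enumerate Q i)"
  have u': "inj u'"
    unfolding u'_def using inj_on_subset[OF u subset_UNIV] Q by (intro inj_piecewise_enumerate) auto
  have "- (A \<union> Q) \<subseteq> - (A \<union> u' ` A)"
    using u_fix enumerate_in_set[OF Q(2)] by (auto simp: u'_def)
  then have R: "infinite (- (A \<union> u' ` A))"
    using Q(3) unfolding coinfinite_iff_infinite_Compl by (rule infinite_super)
  define t where "t = (\<lambda>i. if i \<in> A then u' i else enumerate (- (A \<union> u' ` A)) i)"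
  have t: "inj t"
    unfolding t_def using inj_on_subset[OF u' subset_UNIV] R by (intro inj_piecewise_enumerate) auto
  define s where "s = (\<lambda>i. if i \<in> A then id i else enumerate (- (A \<union> u' ` A)) i)"
  have s: "inj s"
    unfolding s_def using R by (intro inj_piecewise_enumerate) auto
  have "act n (incl_k k u) x = act n (incl_k k u') x"
    by (rule supported_act_incl_k_cong[OF em x supp_D D u u']) (simp add: u'_def)
  also have "\<dots> = act n (incl_k k t) x"
    by (rule supported_act_incl_k_cong[OF em x supp_A A u' t]) (simp add: t_def)
  also have "\<dots> = act n (incl_k k s) x"
    by (rule supported_act_incl_k_cong[OF em x supp_D D t s]) (use u_fix in \<open>auto simp: t_def s_def u'_def\<close>)
  also have "\<dots> = x"
    using supp_A s unfolding supported_def by (simp add: s_def)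
  finally show "act n (incl_k k u) x = x" .
qed

lemma inj_on_range_extend_id:
  assumes "inj u"
  shows "inj (\<lambda>i. if i \<in> range u then u i else id i)"
proof -
  have "inj_on (\<lambda>i. if i \<in> range u then u i else id i) (range u \<union> - range u)"
    using inj_on_subset[OF assms subset_UNIV] by (intro inj_on_disjoint_Un) auto
  then show ?thesis
    by simp
qed

lemma diagonal_fixed_imp_incl_k_fixed:
  assumes em: "em_sset X sm act" and z: "z \<in> X m" and "P k"
    and diag: "\<And>w. inj w \<Longrightarrow> (\<forall>i\<in>A. w i = i) \<Longrightarrow> act m (\<lambda>j. if P j then w else id) z = z"
    and u: "inj u" and u_fix: "\<forall>i\<in>A. u i = i" and range_u: "coinfinite (range u)"
  shows "act m (incl_k k u) z = z"
proof -
  \<comment> \<open>after the diagonal \<open>u\<close>, \<open>i\<^sub>k(u)\<close> may be replaced by \<open>i\<^sub>k(a)\<close>, and \<open>a\<close> fixes the range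
    of the diagonal \<open>w\<close>, which lies in \<open>A \<union> - range u\<close>\<close>
  define a where "a = (\<lambda>i. if i \<in> range u then u i else id i)"
  have inj_a: "inj a"
    unfolding a_def using u by (rule inj_on_range_extend_id)
  have A_range: "A \<subseteq> range u"
    using u_fix by (metis rangeI subsetI)
  define w where "w = (\<lambda>i. if i \<in> A then id i else enumerate (- range u) i)"
  have inj_w: "inj w"
    unfolding w_def using range_u A_range
    by (intro inj_piecewise_enumerate) (auto simp: coinfinite_iff_infinite_Compl)
  have w_fix: "\<forall>i\<in>A. w i = i"
    by (simp add: w_def)
  have "a (w i) = w i" for i
    using u_fix enumerate_in_set[of "- range u"] range_u
    by (auto simp: a_def w_def coinfinite_iff_infinite_Compl)
  then have aw: "(\<lambda>j. incl_k k a j \<circ> (if P j then w else id)) = (\<lambda>j. if P j then w else id)"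
    using \<open>P k\<close> by (auto simp: incl_k_def fun_eq_iff)
  have ua: "(\<lambda>j. incl_k k u j \<circ> (if P j then u else id)) = (\<lambda>j. incl_k k a j \<circ> (if P j then u else id))"
    using \<open>P k\<close> by (auto simp: incl_k_def a_def fun_eq_iff)
  have diag_tuple: "EMtuple m (\<lambda>j. if P j then v else id)" if "inj v" for v
    using that by (simp add: EMtuple_def)
  have "act m (incl_k k u) z = act m (\<lambda>j. incl_k k u j \<circ> (if P j then u else id)) z"
    using em_sset_act_comp[OF em EMtuple_incl_k[OF u] diag_tuple[OF u] z] diag[OF u u_fix] by simp
  also have "\<dots> = act m (incl_k k a) z"
    unfolding ua using em_sset_act_comp[OF em EMtuple_incl_k[OF inj_a] diag_tuple[OF u] z] diag[OF u u_fix]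
    by simp
  also have "\<dots> = act m (\<lambda>j. incl_k k a j \<circ> (if P j then w else id)) z"
    using em_sset_act_comp[OF em EMtuple_incl_k[OF inj_a] diag_tuple[OF inj_w] z] diag[OF inj_w w_fix]
    by simp
  also have "\<dots> = z"
    unfolding aw by (rule diag[OF inj_w w_fix])
  finally show ?thesis .
qed

lemma supported_if_diagonal_fixed:
  assumes em: "em_sset X sm act" and z: "z \<in> X m" and "P k" and A: "coinfinite A"
    and diag: "\<And>w. inj w \<Longrightarrow> (\<forall>i\<in>A. w i = i) \<Longrightarrow> act m (\<lambda>j. if P j then w else id) z = z"
  shows "supported act m z k A"
  unfolding supported_def
proof (intro allI impI)
  fix u :: "nat \<Rightarrow> nat" assume u: "inj u" and u_fix: "\<forall>i\<in>A. u i = i"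
  obtain v where v: "inj v" "\<forall>i\<in>A. v i = i" "coinfinite (range v)"
    using inj_fixing_with_coinfinite_range[OF A] by metis
  have uv: "inj (u \<circ> v)" "\<forall>i\<in>A. (u \<circ> v) i = i"
    using u u_fix v by (auto intro: inj_compose)
  have range_uv: "coinfinite (range (u \<circ> v))"
    using coinfinite_image[OF u v(3)] by (simp add: image_comp)
  have "act m (incl_k k (u \<circ> v)) z = z"
    by (rule diagonal_fixed_imp_incl_k_fixed[OF em z \<open>P k\<close> diag uv range_uv])
  moreover have "act m (incl_k k v) z = z"
    using diagonal_fixed_imp_incl_k_fixed[OF em z \<open>P k\<close> diag v] .
  ultimately show "act m (incl_k k u) z = z"
    using act_incl_k_comp[OF em z u v(1)] by simp
qed

lemma supported_sm:
  assumes em: "em_sset X sm act" and f: "simp_op m n f" and x: "x \<in> X n"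
    and supp: "supported act n x (f k) A" and A: "coinfinite A"
  shows "supported act m (sm m n f x) k A"
proof (rule supported_if_diagonal_fixed[OF em em_sset_sm_closed[OF em f x], of "\<lambda>j. f j = f k"])
  fix w :: "nat \<Rightarrow> nat" assume w: "inj w" and w_fix: "\<forall>i\<in>A. w i = i"
  have "act m (\<lambda>j. if f j = f k then w else id) (sm m n f x) = act m (\<lambda>j. incl_k (f k) w (f j)) (sm m n f x)"
    by (simp add: incl_k_def)
  also have "\<dots> = sm m n f (act n (incl_k (f k) w) x)"
    using em_sset_sm_act[OF em f EMtuple_incl_k[OF w] x] by simp
  also have "act n (incl_k (f k) w) x = x"
    using supp w w_fix unfolding supported_def by blast
  finally show "act m (\<lambda>j. if f j = f k then w else id) (sm m n f x) = sm m n f x" .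
qed (use A in auto)

section \<open>The box product\<close>

lemma box_sm_closed:
  assumes emX: "em_sset X smX aX" and emY: "em_sset Y smY aY"
    and f: "simp_op m n f" and p: "p \<in> box X aX Y aY n"
  shows "prod_sm smX smY m n f p \<in> box X aX Y aY m"
proof -
  obtain x y where xy: "p = (x, y)" "x \<in> X n" "y \<in> Y n"
    using p by (auto simp: box_def)
  have "\<exists>A B. A \<inter> B = {} \<and> coinfinite (A \<union> B) \<and>
      supported aX m (smX m n f x) k A \<and> supported aY m (smY m n f y) k B" if k: "k \<le> m" for k
  proof -
    have "f k \<le> n"
      using f k by (simp add: simp_op_def)
    then obtain A B where AB: "A \<inter> B = {}" "coinfinite (A \<union> B)"
      "supported aX n x (f k) A" "supported aY n y (f k) B"
      using p xy by (auto simp: box_def)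
    moreover have "coinfinite A" "coinfinite B"
      using AB(2) coinfinite_subset by blast+
    ultimately show ?thesis
      using supported_sm[OF emX f xy(2) AB(3)] supported_sm[OF emY f xy(3) AB(4)] by blast
  qed
  then show ?thesis
    using em_sset_sm_closed[OF emX f xy(2)] em_sset_sm_closed[OF emY f xy(3)]
    by (simp add: box_def prod_sm_def xy(1))
qed

lemma box_act_closed:
  assumes emX: "em_sset X smX aX" and emY: "em_sset Y smY aY"
    and u: "EMtuple n u" and p: "p \<in> box X aX Y aY n"
  shows "prod_act aX aY n u p \<in> box X aX Y aY n"
proof -
  obtain x y where xy: "p = (x, y)" "x \<in> X n" "y \<in> Y n"
    using p by (auto simp: box_def)
  have "\<exists>A B. A \<inter> B = {} \<and> coinfinite (A \<union> B) \<and>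
      supported aX n (aX n u x) k A \<and> supported aY n (aY n u y) k B" if k: "k \<le> n" for k
  proof -
    obtain A B where AB: "A \<inter> B = {}" "coinfinite (A \<union> B)"
      "supported aX n x k A" "supported aY n y k B"
      using p xy k by (auto simp: box_def)
    have uk: "inj (u k)"
      using u k by (simp add: EMtuple_def)
    have "u k ` A \<inter> u k ` B = {}" "coinfinite (u k ` A \<union> u k ` B)"
      using AB(1,2) coinfinite_image[OF uk] by (auto simp: image_Int[OF uk, symmetric] image_Un[symmetric])
    moreover have "coinfinite A" "coinfinite B"
      using AB(2) coinfinite_subset by blast+
    ultimately show ?thesis
      using supported_act[OF emX xy(2) u k AB(3)] supported_act[OF emY xy(3) u k AB(4)] by blast
  qed
  then show ?thesis
    using em_sset_act_closed[OF emX u xy(2)] em_sset_act_closed[OF emY u xy(3)]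
    by (simp add: box_def prod_act_def xy(1))
qed

lemma em_sset_box:
  assumes "em_sset X smX aX" "em_sset Y smY aY"
  shows "em_sset (box X aX Y aY) (prod_sm smX smY) (prod_act aX aY)"
proof (rule em_sset_prod_subset[OF assms])
  show "box X aX Y aY n \<subseteq> X n \<times> Y n" for n
    by (auto simp: box_def)
qed (simp_all add: box_sm_closed[OF assms] box_act_closed[OF assms])

lemma mild_box: "mild (box X aX Y aY) (prod_act aX aY)"
  unfolding mild_def box_def
  by (fastforce simp: supported_prod_act_iff intro: supported_mono)

lemma em_sset_term: "em_sset term_X term_sm term_act"
  by (simp add: em_sset_def term_X_def term_sm_def term_act_def)

lemma mild_term: "mild term_X term_act"
  unfolding mild_def term_X_def using coinfinite_empty supported_term_act by blast

definition triple_box ::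
  "(nat \<Rightarrow> 'a set) \<Rightarrow> (nat \<Rightarrow> (nat \<Rightarrow> nat \<Rightarrow> nat) \<Rightarrow> 'a \<Rightarrow> 'a)
     \<Rightarrow> (nat \<Rightarrow> 'b set) \<Rightarrow> (nat \<Rightarrow> (nat \<Rightarrow> nat \<Rightarrow> nat) \<Rightarrow> 'b \<Rightarrow> 'b)
     \<Rightarrow> (nat \<Rightarrow> 'c set) \<Rightarrow> (nat \<Rightarrow> (nat \<Rightarrow> nat \<Rightarrow> nat) \<Rightarrow> 'c \<Rightarrow> 'c) \<Rightarrow> nat \<Rightarrow> ('a \<times> 'b \<times> 'c) set" where
  "triple_box X aX Y aY Z aZ n = {(x, y, z). x \<in> X n \<and> y \<in> Y n \<and> z \<in> Z n \<and>
     (\<forall>k\<le>n. \<exists>A B C. A \<inter> B = {} \<and> A \<inter> C = {} \<and> B \<inter> C = {} \<and> coinfinite (A \<union> B \<union> C) \<and>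
        supported aX n x k A \<and> supported aY n y k B \<and> supported aZ n z k C)}"

lemma box_assoc_left_iff:
  assumes emX: "em_sset X smX aX" and emY: "em_sset Y smY aY"
  shows "((x, y), z) \<in> box (box X aX Y aY) (prod_act aX aY) Z aZ n \<longleftrightarrow>
    (x, y, z) \<in> triple_box X aX Y aY Z aZ n"
proof
  assume xyz: "((x, y), z) \<in> box (box X aX Y aY) (prod_act aX aY) Z aZ n"
  then have x: "x \<in> X n" and y: "y \<in> Y n"
    by (auto simp: box_def)
  have "\<exists>A B C. A \<inter> B = {} \<and> A \<inter> C = {} \<and> B \<inter> C = {} \<and> coinfinite (A \<union> B \<union> C) \<and>
      supported aX n x k A \<and> supported aY n y k B \<and> supported aZ n z k C" if k: "k \<le> n" for k
  proof -
    obtain A B where AB: "A \<inter> B = {}" "coinfinite (A \<union> B)"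
      "supported aX n x k A" "supported aY n y k B"
      using xyz k by (auto simp: box_def)
    obtain D C where DC: "D \<inter> C = {}" "coinfinite (D \<union> C)"
      "supported aX n x k D" "supported aY n y k D" "supported aZ n z k C"
      using xyz k by (auto simp: box_def supported_prod_act_iff)
    have coinf: "coinfinite A" "coinfinite B" "coinfinite D"
      using AB(2) DC(2) coinfinite_subset by blast+
    have "supported aX n x k (A \<inter> D)"
      by (rule supported_Int[OF emX x AB(3) DC(3) coinf(1,3)])
    moreover have "supported aY n y k (B \<inter> D)"
      by (rule supported_Int[OF emY y AB(4) DC(4) coinf(2,3)])
    moreover have "coinfinite (A \<inter> D \<union> B \<inter> D \<union> C)"
      using DC(2) by (rule coinfinite_subset) blast
    ultimately show ?thesis
      using AB(1) DC(1,5) by (intro exI[of _ "A \<inter> D"] exI[of _ "B \<inter> D"] exI[of _ C]) auto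
  qed
  then show "(x, y, z) \<in> triple_box X aX Y aY Z aZ n"
    using xyz by (auto simp: box_def triple_box_def)
next
  assume "(x, y, z) \<in> triple_box X aX Y aY Z aZ n"
  then have x: "x \<in> X n" and y: "y \<in> Y n" and z: "z \<in> Z n"
    and supp: "\<And>k. k \<le> n \<Longrightarrow> \<exists>A B C. A \<inter> B = {} \<and> A \<inter> C = {} \<and> B \<inter> C = {} \<and>
      coinfinite (A \<union> B \<union> C) \<and> supported aX n x k A \<and> supported aY n y k B \<and> supported aZ n z k C"
    by (auto simp: triple_box_def)
  have "\<exists>A B. A \<inter> B = {} \<and> coinfinite (A \<union> B) \<and> supported aX n x k A \<and> supported aY n y k B"
    if "k \<le> n" for k
    using supp[OF that] by (meson Int_assoc coinfinite_subset sup_ge1)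
  then have xy: "(x, y) \<in> box X aX Y aY n"
    using x y by (simp add: box_def)
  have "\<exists>D C. D \<inter> C = {} \<and> coinfinite (D \<union> C) \<and>
      supported (prod_act aX aY) n (x, y) k D \<and> supported aZ n z k C" if k: "k \<le> n" for k
  proof -
    obtain A B C where ABC: "A \<inter> B = {}" "A \<inter> C = {}" "B \<inter> C = {}" "coinfinite (A \<union> B \<union> C)"
      "supported aX n x k A" "supported aY n y k B" "supported aZ n z k C"
      using supp[OF k] by blast
    then have "supported (prod_act aX aY) n (x, y) k (A \<union> B)"
      by (simp add: supported_prod_act_iff supported_mono)
    then show ?thesis
      using ABC by (intro exI[of _ "A \<union> B"] exI[of _ C]) auto
  qed
  then show "((x, y), z) \<in> box (box X aX Y aY) (prod_act aX aY) Z aZ n"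
    using xy z by (simp add: box_def)
qed

lemma box_assoc_right_iff:
  assumes emY: "em_sset Y smY aY" and emZ: "em_sset Z smZ aZ"
  shows "(x, y, z) \<in> box X aX (box Y aY Z aZ) (prod_act aY aZ) n \<longleftrightarrow>
    (x, y, z) \<in> triple_box X aX Y aY Z aZ n"
proof
  assume xyz: "(x, y, z) \<in> box X aX (box Y aY Z aZ) (prod_act aY aZ) n"
  then have y: "y \<in> Y n" and z: "z \<in> Z n"
    by (auto simp: box_def)
  have "\<exists>A B C. A \<inter> B = {} \<and> A \<inter> C = {} \<and> B \<inter> C = {} \<and> coinfinite (A \<union> B \<union> C) \<and>
      supported aX n x k A \<and> supported aY n y k B \<and> supported aZ n z k C" if k: "k \<le> n" for k
  proof -
    obtain B C where BC: "B \<inter> C = {}" "coinfinite (B \<union> C)"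
      "supported aY n y k B" "supported aZ n z k C"
      using xyz k by (auto simp: box_def)
    obtain A E where AE: "A \<inter> E = {}" "coinfinite (A \<union> E)"
      "supported aX n x k A" "supported aY n y k E" "supported aZ n z k E"
      using xyz k by (auto simp: box_def supported_prod_act_iff)
    have coinf: "coinfinite B" "coinfinite C" "coinfinite E"
      using BC(2) AE(2) coinfinite_subset by blast+
    have "supported aY n y k (B \<inter> E)"
      by (rule supported_Int[OF emY y BC(3) AE(4) coinf(1,3)])
    moreover have "supported aZ n z k (C \<inter> E)"
      by (rule supported_Int[OF emZ z BC(4) AE(5) coinf(2,3)])
    moreover have "coinfinite (A \<union> B \<inter> E \<union> C \<inter> E)"
      using AE(2) by (rule coinfinite_subset) blast
    ultimately show ?thesis
      using AE(1,3) BC(1) by (intro exI[of _ A] exI[of _ "B \<inter> E"] exI[of _ "C \<inter> E"]) auto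
  qed
  then show "(x, y, z) \<in> triple_box X aX Y aY Z aZ n"
    using xyz by (auto simp: box_def triple_box_def)
next
  assume "(x, y, z) \<in> triple_box X aX Y aY Z aZ n"
  then have x: "x \<in> X n" and y: "y \<in> Y n" and z: "z \<in> Z n"
    and supp: "\<And>k. k \<le> n \<Longrightarrow> \<exists>A B C. A \<inter> B = {} \<and> A \<inter> C = {} \<and> B \<inter> C = {} \<and>
      coinfinite (A \<union> B \<union> C) \<and> supported aX n x k A \<and> supported aY n y k B \<and> supported aZ n z k C"
    by (auto simp: triple_box_def)
  have "\<exists>B C. B \<inter> C = {} \<and> coinfinite (B \<union> C) \<and> supported aY n y k B \<and> supported aZ n z k C"
    if k: "k \<le> n" for k
  proof -
    obtain A B C where ABC: "B \<inter> C = {}" "coinfinite (A \<union> B \<union> C)"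
      "supported aY n y k B" "supported aZ n z k C"
      using supp[OF k] by blast
    moreover have "coinfinite (B \<union> C)"
      using ABC(2) by (rule coinfinite_subset) blast
    ultimately show ?thesis
      by blast
  qed
  then have yz: "(y, z) \<in> box Y aY Z aZ n"
    using y z by (simp add: box_def)
  have "\<exists>A E. A \<inter> E = {} \<and> coinfinite (A \<union> E) \<and>
      supported aX n x k A \<and> supported (prod_act aY aZ) n (y, z) k E" if k: "k \<le> n" for k
  proof -
    obtain A B C where ABC: "A \<inter> B = {}" "A \<inter> C = {}" "B \<inter> C = {}" "coinfinite (A \<union> B \<union> C)"
      "supported aX n x k A" "supported aY n y k B" "supported aZ n z k C"
      using supp[OF k] by blast
    then have "supported (prod_act aY aZ) n (y, z) k (B \<union> C)"
      by (simp add: supported_prod_act_iff supported_mono)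
    then show ?thesis
      using ABC by (intro exI[of _ A] exI[of _ "B \<union> C"]) (auto simp: Un_assoc)
  qed
  then show "(x, y, z) \<in> box X aX (box Y aY Z aZ) (prod_act aY aZ) n"
    using x yz by (simp add: box_def)
qed

lemma box_swap: "(x, y) \<in> box X aX Y aY n \<Longrightarrow> (y, x) \<in> box Y aY X aX n"
  unfolding box_def by (auto simp: Int_commute Un_commute) (metis Int_commute Un_commute)

lemma box_term_left:
  assumes "mild X aX"
  shows "box term_X term_act X aX n = {()} \<times> X n"
proof -
  have "\<exists>A B. A \<inter> B = {} \<and> coinfinite (A \<union> B) \<and> supported term_act n () k A \<and> supported aX n x k B"
    if x: "x \<in> X n" and k: "k \<le> n" for x k
  proof -
    obtain B where "coinfinite B" "supported aX n x k B"
      using assms x k unfolding mild_def by blast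
    then show ?thesis
      using supported_term_act by (intro exI[of _ "{}"] exI[of _ B]) simp
  qed
  then show ?thesis
    by (auto simp: box_def term_X_def)
qed

lemma box_term_right:
  assumes "mild X aX"
  shows "box X aX term_X term_act n = X n \<times> {()}"
proof -
  have "\<exists>A B. A \<inter> B = {} \<and> coinfinite (A \<union> B) \<and> supported aX n x k A \<and> supported term_act n () k B"
    if x: "x \<in> X n" and k: "k \<le> n" for x k
  proof -
    obtain A where "coinfinite A" "supported aX n x k A"
      using assms x k unfolding mild_def by blast
    then show ?thesis
      using supported_term_act by (intro exI[of _ A] exI[of _ "{}"]) simp
  qed
  then show ?thesis
    by (auto simp: box_def term_X_def)
qed

theorem proposition2p18:
  fixes X :: "nat \<Rightarrow> 'a set" and smX :: "nat \<Rightarrow> nat \<Rightarrow> (nat \<Rightarrow> nat) \<Rightarrow> 'a \<Rightarrow> 'a"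
    and actX :: "nat \<Rightarrow> (nat \<Rightarrow> nat \<Rightarrow> nat) \<Rightarrow> 'a \<Rightarrow> 'a"
    and Y :: "nat \<Rightarrow> 'b set" and smY :: "nat \<Rightarrow> nat \<Rightarrow> (nat \<Rightarrow> nat) \<Rightarrow> 'b \<Rightarrow> 'b"
    and actY :: "nat \<Rightarrow> (nat \<Rightarrow> nat \<Rightarrow> nat) \<Rightarrow> 'b \<Rightarrow> 'b"
    and Z :: "nat \<Rightarrow> 'c set" and smZ :: "nat \<Rightarrow> nat \<Rightarrow> (nat \<Rightarrow> nat) \<Rightarrow> 'c \<Rightarrow> 'c"
    and actZ :: "nat \<Rightarrow> (nat \<Rightarrow> nat \<Rightarrow> nat) \<Rightarrow> 'c \<Rightarrow> 'c"
  assumes "em_sset X smX actX" and "mild X actX"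
    and "em_sset Y smY actY" and "mild Y actY"
    and "em_sset Z smZ actZ" and "mild Z actZ"
  shows
    \<comment> \<open>the box product is a mild E M-simplicial subset of the product (well-definedness)\<close>
    "em_sset (box X actX Y actY) (prod_sm smX smY) (prod_act actX actY)
     \<and> mild (box X actX Y actY) (prod_act actX actY)
     \<comment> \<open>the terminal object is a mild E M-simplicial set (the unit)\<close>
     \<and> em_sset term_X term_sm term_act \<and> mild term_X term_act
     \<comment> \<open>associator restricts to an isomorphism\<close>
     \<and> (\<forall>n. bij_betw (\<lambda>((x, y), z). (x, (y, z)))
             (box (box X actX Y actY) (prod_act actX actY) Z actZ n)
             (box X actX (box Y actY Z actZ) (prod_act actY actZ) n))
     \<comment> \<open>symmetry restricts to an isomorphism\<close>
     \<and> (\<forall>n. bij_betw (\<lambda>(x, y). (y, x)) (box X actX Y actY n) (box Y actY X actX n))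
     \<comment> \<open>left and right unitors restrict to isomorphisms\<close>
     \<and> (\<forall>n. bij_betw snd (box term_X term_act X actX n) (X n))
     \<and> (\<forall>n. bij_betw fst (box X actX term_X term_act n) (X n))"
proof (intro conjI allI)
  fix n
  show "bij_betw (\<lambda>((x, y), z). (x, (y, z)))
      (box (box X actX Y actY) (prod_act actX actY) Z actZ n)
      (box X actX (box Y actY Z actZ) (prod_act actY actZ) n)"
    by (rule bij_betw_byWitness[where f' = "\<lambda>(x, y, z). ((x, y), z)"])
      (auto simp: box_assoc_left_iff[OF assms(1,3)] box_assoc_right_iff[OF assms(3,5)])
  show "bij_betw (\<lambda>(x, y). (y, x)) (box X actX Y actY n) (box Y actY X actX n)"
    by (rule bij_betw_byWitness[where f' = "\<lambda>(y, x). (x, y)"]) (auto intro: box_swap)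
  show "bij_betw snd (box term_X term_act X actX n) (X n)"
    by (simp add: box_term_left[OF assms(2)] bij_betw_def inj_on_def)
  show "bij_betw fst (box X actX term_X term_act n) (X n)"
    by (simp add: box_term_right[OF assms(2)] bij_betw_def inj_on_def)
qed (simp_all add: em_sset_box[OF assms(1,3)] mild_box em_sset_term mild_term)

end
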